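(* Assume we are either in the $\delta$-algebraic setting or in the $\delta$-arithmetic setting. Let $f:R^{\times}\rightarrow R$ be a $\delta$-map and $s\neq 0$ an integer such that for all $a_1,a_2\in R^{\times}$, $$f(a_1a_2)=f(a_1)+a_1^sf(a_2).$$ Then there exists $\mu\in R$ such that $f(a)=\mu(1-a^s)$ for all $a\in R^{\times}$.
   Context: $\delta$-arithmetic setting: $p$ is an odd prime, $R$ is the complete discrete valuation ring with maximal ideal $pR$ and residue field $\mathbb{F}_p^a$; $\phi:R\to R$ is the unique ring endomorphism lifting Frobenius, and $\delta x=(\phi(x)-x^p)/p$. Here a $\delta$-map $R^{\times}\to R$ is a map of the form $a\mapsto F(a,\delta a,\dots,\delta^m a)$ with $F\in R[x,x^{-1},x',\dots,x^{(m)}]\hat{\ }$ (restricted power series, $\hat{\ }$ = $p$-adic completion). $\delta$-algebraic setting: $R$ is a field of characteristic zero with a derivation $\delta$, $\delta$-closed in Kolchin's sense; a $\delta$-map $R^{\times}\to R$ is a map $a\mapsto F(a,\delta a,\dots,\delta^m a)$ with $F$ a polynomial in $R[x,x^{-1},x',\dots,x^{(m)}]$. *)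

theory Defs
  imports Main "HOL-Library.Poly_Mapping" "HOL-Computational_Algebra.Polynomial"
begin

definition units_of_ring :: "'a::comm_ring_1 set" where
  "units_of_ring = {a. a dvd 1}"

definition upow :: "'a::comm_ring_1 \<Rightarrow> int \<Rightarrow> 'a" where
  "upow a k = (if 0 \<le> k then a ^ nat k else (THE b. a * b = 1) ^ nat (- k))"

text \<open>Monomial x^k * prod_i (x^(i+1))^(e i) of the ring R[x,x^-1,x',x'',...],
  evaluated at x^(j) := delta^j a. The exponent of x is an integer k,
  the finitely supported map e gives the exponent of x^(i+1) at index i.\<close>
definition dmon :: "('a::comm_ring_1 \<Rightarrow> 'a) \<Rightarrow> int \<times> (nat \<Rightarrow>\<^sub>0 nat) \<Rightarrow> 'a \<Rightarrow> 'a" where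
  "dmon \<delta> ke a = upow a (fst ke) *
      (\<Prod>i\<in>Poly_Mapping.keys (snd ke). ((\<delta> ^^ Suc i) a) ^ Poly_Mapping.lookup (snd ke) i)"

text \<open>Differential polynomials in one differential indeterminate y: finitely supported
  maps from exponent vectors (e i = exponent of y^(i)) to coefficients.\<close>
definition deval :: "('a::comm_ring_1 \<Rightarrow> 'a) \<Rightarrow> ((nat \<Rightarrow>\<^sub>0 nat) \<Rightarrow>\<^sub>0 'a) \<Rightarrow> 'a \<Rightarrow> 'a" where
  "deval \<delta> P a = (\<Sum>e\<in>Poly_Mapping.keys P. Poly_Mapping.lookup P e * (\<Prod>i\<in>Poly_Mapping.keys e. ((\<delta> ^^ i) a) ^ Poly_Mapping.lookup e i))"

definition dvars :: "((nat \<Rightarrow>\<^sub>0 nat) \<Rightarrow>\<^sub>0 'a::zero) \<Rightarrow> nat set" where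
  "dvars P = (\<Union>e\<in>Poly_Mapping.keys P. Poly_Mapping.keys e)"

text \<open>R is a field of characteristic zero, \<delta> is a derivation, and (R,\<delta>) is
  differentially closed (Blum's axioms: for differential polynomials P, Q with
  Q nonzero and ord Q < ord P there is a with P(a) = 0 and Q(a) \<noteq> 0).\<close>
definition delta_alg_setting :: "('a::idom \<Rightarrow> 'a) \<Rightarrow> bool" where
  "delta_alg_setting \<delta> \<longleftrightarrow>
     (\<forall>x::'a. x \<noteq> 0 \<longrightarrow> x dvd 1) \<and>
     (\<forall>n. (of_nat (Suc n) :: 'a) \<noteq> 0) \<and>
     (\<forall>x y. \<delta> (x + y) = \<delta> x + \<delta> y) \<and>
     (\<forall>x y. \<delta> (x * y) = x * \<delta> y + \<delta> x * y) \<and>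
     (\<forall>(P :: (nat \<Rightarrow>\<^sub>0 nat) \<Rightarrow>\<^sub>0 'a) Q n.
        n \<in> dvars P \<and> Q \<noteq> 0 \<and> dvars Q \<subseteq> {..<n} \<longrightarrow>
        (\<exists>a. deval \<delta> P a = 0 \<and> deval \<delta> Q a \<noteq> 0))"

text \<open>delta-maps in the algebraic setting: a \<mapsto> F(a, \<delta>a, ..., \<delta>^m a) with
  F in R[x, x^-1, x', ..., x^(m)] (a polynomial; m is implicit by finiteness).\<close>
definition delta_map_alg :: "('a::comm_ring_1 \<Rightarrow> 'a) \<Rightarrow> ('a \<Rightarrow> 'a) \<Rightarrow> bool" where
  "delta_map_alg \<delta> f \<longleftrightarrow>
     (\<exists>F :: (int \<times> (nat \<Rightarrow>\<^sub>0 nat)) \<Rightarrow>\<^sub>0 'a.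
        \<forall>a\<in>units_of_ring. f a = (\<Sum>ke\<in>Poly_Mapping.keys F. Poly_Mapping.lookup F ke * dmon \<delta> ke a))"

definition in_pow_ideal :: "nat \<Rightarrow> nat \<Rightarrow> 'a::comm_ring_1 \<Rightarrow> bool" where
  "in_pow_ideal p n x \<longleftrightarrow> (of_nat p :: 'a) ^ n dvd x"

text \<open>R is a complete discrete valuation ring with maximal ideal pR (p an odd prime)
  whose residue field R/pR is an algebraic closure of F_p (i.e. it is algebraically
  closed and every element is algebraic over F_p, equivalently fixed by some power
  of Frobenius); \<phi> is a ring endomorphism lifting Frobenius, and
  \<delta> x = (\<phi> x - x^p)/p.\<close>
definition delta_arith_setting :: "nat \<Rightarrow> ('a::idom \<Rightarrow> 'a) \<Rightarrow> ('a \<Rightarrow> 'a) \<Rightarrow> bool" where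
  "delta_arith_setting p \<phi> \<delta> \<longleftrightarrow>
     prime p \<and> odd p \<and>
     \<comment> \<open>DVR with uniformizer p (p is a nonunit, every nonzero element is a unit times a power of p)\<close>
     \<not> ((of_nat p :: 'a) dvd 1) \<and>
     (\<forall>x::'a. x \<noteq> 0 \<longrightarrow> (\<exists>u n. u dvd 1 \<and> x = u * of_nat p ^ n)) \<and>
     \<comment> \<open>p-adic completeness\<close>
     (\<forall>X :: nat \<Rightarrow> 'a. (\<forall>n. \<exists>N. \<forall>i\<ge>N. \<forall>j\<ge>N. in_pow_ideal p n (X i - X j)) \<longrightarrow>
        (\<exists>L. \<forall>n. \<exists>N. \<forall>i\<ge>N. in_pow_ideal p n (X i - L))) \<and>
     \<comment> \<open>residue field R/pR is algebraically closed\<close>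
     (\<forall>c :: 'a poly. degree c \<ge> 1 \<and> lead_coeff c = 1 \<longrightarrow>
        (\<exists>a. in_pow_ideal p 1 (poly c a))) \<and>
     \<comment> \<open>residue field R/pR is algebraic over F_p\<close>
     (\<forall>a::'a. \<exists>n\<ge>1. in_pow_ideal p 1 (a ^ (p ^ n) - a)) \<and>
     \<comment> \<open>\<phi> is a ring endomorphism lifting Frobenius\<close>
     \<phi> 1 = 1 \<and> (\<forall>x y. \<phi> (x + y) = \<phi> x + \<phi> y) \<and> (\<forall>x y. \<phi> (x * y) = \<phi> x * \<phi> y) \<and>
     (\<forall>x. in_pow_ideal p 1 (\<phi> x - x ^ p)) \<and>
     \<comment> \<open>\<delta> x = (\<phi> x - x^p) / p\<close>
     (\<forall>x. of_nat p * \<delta> x = \<phi> x - x ^ p)"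

text \<open>delta-maps in the arithmetic setting: a \<mapsto> F(a, \<delta>a, ..., \<delta>^m a) where F is a
  restricted power series in R[x, x^-1, x', ..., x^(m)]^ (p-adic completion), i.e.
  F = \<Sum> c_e * monomial_e with c_e \<rightarrow> 0 p-adically (for each n only finitely many
  c_e lie outside p^n R); the value is the p-adic limit of the series.\<close>
definition delta_map_arith :: "nat \<Rightarrow> ('a::comm_ring_1 \<Rightarrow> 'a) \<Rightarrow> ('a \<Rightarrow> 'a) \<Rightarrow> bool" where
  "delta_map_arith p \<delta> f \<longleftrightarrow>
     (\<exists>(m::nat) (c :: int \<times> (nat \<Rightarrow>\<^sub>0 nat) \<Rightarrow> 'a).
        (\<forall>ke. c ke \<noteq> 0 \<longrightarrow> Poly_Mapping.keys (snd ke) \<subseteq> {..<m}) \<and>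
        (\<forall>n. finite {ke. \<not> in_pow_ideal p n (c ke)}) \<and>
        (\<forall>a\<in>units_of_ring. \<forall>n.
           in_pow_ideal p n (f a - (\<Sum>ke | \<not> in_pow_ideal p n (c ke). c ke * dmon \<delta> ke a))))"

end

theory Submission
  imports Defs
begin

text \<open>Comparing \<open>f(ab)\<close> with \<open>f(ba)\<close> in the cocycle identity gives
  \<open>f a (1 - b^s) = f b (1 - a^s)\<close> for all units \<open>a, b\<close>. Hence it suffices to find a single
  unit \<open>b\<close> for which \<open>1 - b^s\<close> is again a unit, and then \<open>\<mu> = f b / (1 - b^s)\<close>.
  In the differential setting \<open>b = 2\<close> works because of characteristic zero; in the
  arithmetic setting \<open>b\<close> is a root modulo \<open>p\<close> of \<open>X^(|s|+1) - X - 1\<close>, which exists since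
  the residue field is algebraically closed, and both \<open>b\<close> and \<open>b^|s| - 1\<close> are nonzero modulo \<open>p\<close>.\<close>

lemma cocycle_eq_coboundary:
  fixes f \<chi> :: "'a::comm_ring_1 \<Rightarrow> 'a"
  assumes cocycle: "\<forall>a1\<in>units_of_ring. \<forall>a2\<in>units_of_ring. f (a1 * a2) = f a1 + \<chi> a1 * f a2"
    and b: "b \<in> units_of_ring" and unit: "(1 - \<chi> b) dvd 1"
  shows "\<exists>\<mu>. \<forall>a\<in>units_of_ring. f a = \<mu> * (1 - \<chi> a)"
proof -
  obtain c where c: "1 = (1 - \<chi> b) * c" using unit by (elim dvdE)
  have "f a = (c * f b) * (1 - \<chi> a)" if a: "a \<in> units_of_ring" for a
  proof -
    have "f (a * b) = f a + \<chi> a * f b" "f (b * a) = f b + \<chi> b * f a"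
      using cocycle a b by blast+
    then have eq: "f a * (1 - \<chi> b) = f b * (1 - \<chi> a)"
      by (simp add: algebra_simps)
    have "f a = c * (f a * (1 - \<chi> b))" using c by (metis mult.commute mult.left_commute mult_1)
    also have "\<dots> = (c * f b) * (1 - \<chi> a)" by (simp only: eq mult.assoc)
    finally show ?thesis .
  qed
  then show ?thesis by blast
qed

lemma mult_THE_inverse:
  fixes a :: "'a::idom"
  assumes "a dvd 1"
  shows "a * (THE b. a * b = 1) = 1"
proof (rule theI')
  obtain b where b: "1 = a * b" using assms by (elim dvdE)
  show "\<exists>!b. a * b = 1"
  proof
    show "a * b = 1" using b by simp
  next
    fix c assume "a * c = 1"
    then show "c = b" using b by (metis mult.assoc mult.commute mult_1)
  qed
qed

lemma one_minus_upow_unit: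
  fixes a :: "'a::idom" and s :: int
  assumes a: "a dvd 1" and unit: "(a ^ nat \<bar>s\<bar> - 1) dvd 1"
  shows "(1 - upow a s) dvd 1"
proof (cases "0 \<le> s")
  case True
  then have "1 - upow a s = - (a ^ nat \<bar>s\<bar> - 1)" by (simp add: upow_def)
  then show ?thesis using unit by (simp only: minus_dvd_iff)
next
  case False
  define a' where "a' = (THE b. a * b = 1)"
  have "a * a' = 1" unfolding a'_def using a by (rule mult_THE_inverse)
  then have "(1 - a' ^ nat \<bar>s\<bar>) * a ^ nat \<bar>s\<bar> = a ^ nat \<bar>s\<bar> - 1"
    by (simp add: algebra_simps flip: power_mult_distrib)
  moreover have "upow a s = a' ^ nat \<bar>s\<bar>" using False by (simp add: upow_def a'_def)
  ultimately have "(1 - upow a s) dvd (a ^ nat \<bar>s\<bar> - 1)" by (metis dvd_triv_left)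
  then show ?thesis using unit by (rule dvd_trans)
qed

lemma two_power_minus_one_nonzero:
  assumes char0: "\<forall>n. (of_nat (Suc n) :: 'a::comm_ring_1) \<noteq> 0" and n: "n \<ge> 1"
  shows "(2::'a) ^ n - 1 \<noteq> 0"
proof -
  have "(2::nat) ^ n \<ge> 2" using n by (metis power_one_right power_increasing one_le_numeral)
  then have "(2::'a) ^ n - 1 = of_nat (Suc (2 ^ n - 2))"
    by (simp add: of_nat_diff Suc_diff_Suc numeral_2_eq_2)
  then show ?thesis using char0 by simp
qed

lemma delta_alg_exists_unit_one_minus_upow_unit:
  assumes "delta_alg_setting (\<delta> :: 'a::idom \<Rightarrow> 'a)" and "s \<noteq> 0"
  shows "\<exists>b::'a. b \<in> units_of_ring \<and> (1 - upow b s) dvd 1"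
proof -
  have field: "\<forall>x::'a. x \<noteq> 0 \<longrightarrow> x dvd 1" and char0: "\<forall>n. (of_nat (Suc n) :: 'a) \<noteq> 0"
    using assms(1) unfolding delta_alg_setting_def by blast+
  have two: "(2::'a) dvd 1" using field char0[rule_format, of 1] by simp
  have "((2::'a) ^ nat \<bar>s\<bar> - 1) dvd 1"
    using field two_power_minus_one_nonzero[OF char0] \<open>s \<noteq> 0\<close> by simp
  with two show ?thesis by (auto simp: units_of_ring_def intro: one_minus_upow_unit)
qed

lemma delta_arith_unit_if_not_dvd:
  fixes y :: "'a::idom"
  assumes "delta_arith_setting p \<phi> (\<delta> :: 'a \<Rightarrow> 'a)" and "\<not> of_nat p dvd y"
  shows "y dvd 1"
proof -
  have "y \<noteq> 0" using assms(2) by (metis dvd_0_right)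
  moreover have "\<forall>x::'a. x \<noteq> 0 \<longrightarrow> (\<exists>u n. u dvd 1 \<and> x = u * of_nat p ^ n)"
    using assms(1) unfolding delta_arith_setting_def by (elim conjE) assumption
  ultimately obtain u k where "u dvd 1" "y = u * of_nat p ^ k" by blast
  with assms(2) show ?thesis by (cases k) auto
qed

lemma delta_arith_exists_unit_one_minus_upow_unit:
  assumes setting: "delta_arith_setting p \<phi> (\<delta> :: 'a::idom \<Rightarrow> 'a)" and "s \<noteq> 0"
  shows "\<exists>b::'a. b \<in> units_of_ring \<and> (1 - upow b s) dvd 1"
proof -
  let ?P = "of_nat p :: 'a" and ?n = "nat \<bar>s\<bar>"
  define c :: "'a poly" where "c = monom 1 (Suc ?n) - [:1, 1:]"
  have n: "?n \<ge> 1" using \<open>s \<noteq> 0\<close> by simp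
  have coeff_top: "coeff c (Suc ?n) = 1"
    using n by (simp add: c_def coeff_monom coeff_pCons split: nat.split)
  have "degree c \<le> Suc ?n"
    unfolding c_def using n by (intro degree_diff_le degree_monom_le) simp_all
  moreover have "Suc ?n \<le> degree c" using coeff_top by (intro le_degree) simp
  ultimately have "degree c = Suc ?n" by simp
  with coeff_top have "degree c \<ge> 1 \<and> lead_coeff c = 1" by simp
  moreover have "\<forall>c :: 'a poly. degree c \<ge> 1 \<and> lead_coeff c = 1 \<longrightarrow>
      (\<exists>x. in_pow_ideal p 1 (poly c x))"
    using setting unfolding delta_arith_setting_def by (elim conjE) assumption
  ultimately obtain x where "in_pow_ideal p 1 (poly c x)" by blast
  moreover have "poly c x = x * (x ^ ?n - 1) - 1"
    by (simp add: c_def poly_monom right_diff_distrib)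
  ultimately have root: "?P dvd x * (x ^ ?n - 1) - 1" by (simp add: in_pow_ideal_def)
  have not_dvd: "\<not> ?P dvd x * (x ^ ?n - 1)"
  proof
    assume "?P dvd x * (x ^ ?n - 1)"
    from dvd_diff[OF this root] have "?P dvd 1" by simp
    with setting show False unfolding delta_arith_setting_def by (elim conjE) simp
  qed
  have x: "x dvd 1"
    using not_dvd by (intro delta_arith_unit_if_not_dvd[OF setting]) (metis dvd_mult2)
  have "(x ^ ?n - 1) dvd 1"
    using not_dvd by (intro delta_arith_unit_if_not_dvd[OF setting]) (metis dvd_mult)
  with x show ?thesis by (auto simp: units_of_ring_def intro: one_minus_upow_unit)
qed

theorem lemma3p5:
  fixes \<delta> :: "'a::idom \<Rightarrow> 'a" and \<phi> :: "'a \<Rightarrow> 'a" and p :: nat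
    and f :: "'a \<Rightarrow> 'a" and s :: int
  assumes setting:
    "(delta_alg_setting \<delta> \<and> delta_map_alg \<delta> f) \<or>
     (delta_arith_setting p \<phi> \<delta> \<and> delta_map_arith p \<delta> f)"
    and s_nz: "s \<noteq> 0"
    and cocycle: "\<forall>a1\<in>units_of_ring. \<forall>a2\<in>units_of_ring.
                    f (a1 * a2) = f a1 + upow a1 s * f a2"
  shows "\<exists>\<mu>. \<forall>a\<in>units_of_ring. f a = \<mu> * (1 - upow a s)"
proof -
  obtain b :: 'a where "b \<in> units_of_ring" "(1 - upow b s) dvd 1"
    using setting delta_alg_exists_unit_one_minus_upow_unit[OF _ s_nz]
      delta_arith_exists_unit_one_minus_upow_unit[OF _ s_nz] by blast
  then show ?thesis
    using cocycle_eq_coboundary[where \<chi> = "\<lambda>a. upow a s", OF cocycle] by blast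
qed

end
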